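(* Let $N=(P,T,F,I,O)$ be a pWF net with a transition $t^*$ and a place $p^*$ such that $t^*\bullet=\{p^*\}$, $\bullet p^*=\{t^*\}$, $p^*\notin I\cup O$, and $F\cap(\bullet t^*\times p^*\bullet)=\emptyset$. Let $M$ be the net with input set $I$ and output set $O$ obtained from $N$ by removing $t^*$, $p^*$ and all edges incident to them, and adding all edges in $\bullet t^*\times p^*\bullet$ (preset and postset taken in $N$). Then $M$ is a pWF net, and if $N$ is sub-sound then $M$ is sub-sound.
   Context: Petri nets and markings. A Petri net is a triple $(P,T,F)$ with $P$ a finite set of places, $T$ a finite set of transitions, $P\cap T=\emptyset$, and $F\subseteq (P\times T)\cup(T\times P)$. For a node $x$, $\bullet x=\{y\mid (y,x)\in F\}$, $x\bullet=\{y\mid (x,y)\in F\}$. A marking is a multiset over $P$ (a function $P\to\mathbb N$); sets of places are identified with bags of multiplicity one, $+,-,\le$ are pointwise, and $k.m$ is the sum of $k$ copies of $m$. Transition $t$ is enabled at $m$ iff $\bullet t\le m$, firing gives $m-\bullet t+t\bullet$, and $m\xrightarrow{*}m'$ denotes reachability by a finite (possibly empty) firing sequence. A pWF net is $(P,T,F,I,O)$ with $(P,T,F)$ a Petri net, $I,O\subseteq P$ non-empty (input/output places), every node reachable by a directed path from some node of $I$, and some node of $O$ reachable from every node; input places may have incoming edges and output places outgoing edges. Sub-soundness. A pWF net is sub-sound if for all integers $k\ge k'\ge 0$ and every marking $m'$: if $k.I\xrightarrow{*}m'+k'.O$ then $m'\xrightarrow{*}(k-k').O$. *)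

theory Defs
  imports Main
begin

definition petri_net :: "'a set \<Rightarrow> 'a set \<Rightarrow> ('a \<times> 'a) set \<Rightarrow> bool" where
  "petri_net P T F \<longleftrightarrow> finite P \<and> finite T \<and> P \<inter> T = {} \<and> F \<subseteq> (P \<times> T) \<union> (T \<times> P)"

definition preset :: "('a \<times> 'a) set \<Rightarrow> 'a \<Rightarrow> 'a set" where
  "preset F x = {y. (y, x) \<in> F}"

definition postset :: "('a \<times> 'a) set \<Rightarrow> 'a \<Rightarrow> 'a set" where
  "postset F x = {y. (x, y) \<in> F}"

definition pWF :: "'a set \<Rightarrow> 'a set \<Rightarrow> ('a \<times> 'a) set \<Rightarrow> 'a set \<Rightarrow> 'a set \<Rightarrow> bool" where
  "pWF P T F In Out \<longleftrightarrow> petri_net P T F \<and> In \<subseteq> P \<and> Out \<subseteq> P \<and> In \<noteq> {} \<and> Out \<noteq> {} \<and>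
     (\<forall>x \<in> P \<union> T. \<exists>i \<in> In. (i, x) \<in> F\<^sup>*) \<and>
     (\<forall>x \<in> P \<union> T. \<exists>q \<in> Out. (x, q) \<in> F\<^sup>*)"

type_synonym 'a marking = "'a \<Rightarrow> nat"

definition is_marking :: "'a set \<Rightarrow> 'a marking \<Rightarrow> bool" where
  "is_marking P m \<longleftrightarrow> (\<forall>p. p \<notin> P \<longrightarrow> m p = 0)"

definition bag :: "'a set \<Rightarrow> 'a marking" where
  "bag A = (\<lambda>p. if p \<in> A then 1 else 0)"

definition smult_mark :: "nat \<Rightarrow> 'a marking \<Rightarrow> 'a marking" where
  "smult_mark k m = (\<lambda>p. k * m p)"

definition enabled :: "('a \<times> 'a) set \<Rightarrow> 'a \<Rightarrow> 'a marking \<Rightarrow> bool" where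
  "enabled F t m \<longleftrightarrow> (\<forall>p. bag (preset F t) p \<le> m p)"

definition fire_step :: "'a set \<Rightarrow> ('a \<times> 'a) set \<Rightarrow> 'a marking \<Rightarrow> 'a marking \<Rightarrow> bool" where
  "fire_step T F m m' \<longleftrightarrow> (\<exists>t \<in> T. enabled F t m \<and> m' = (\<lambda>p. m p - bag (preset F t) p + bag (postset F t) p))"

definition reach :: "'a set \<Rightarrow> ('a \<times> 'a) set \<Rightarrow> 'a marking \<Rightarrow> 'a marking \<Rightarrow> bool" where
  "reach T F = (fire_step T F)\<^sup>*\<^sup>*"

definition sub_sound :: "'a set \<Rightarrow> 'a set \<Rightarrow> ('a \<times> 'a) set \<Rightarrow> 'a set \<Rightarrow> 'a set \<Rightarrow> bool" where
  "sub_sound P T F In Out \<longleftrightarrow>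
     (\<forall>k k' :: nat. \<forall>m'. k' \<le> k \<longrightarrow> is_marking P m' \<longrightarrow>
        reach T F (smult_mark k (bag In)) (\<lambda>p. m' p + smult_mark k' (bag Out) p) \<longrightarrow>
        reach T F m' (smult_mark (k - k') (bag Out)))"

definition red_flow :: "('a \<times> 'a) set \<Rightarrow> 'a \<Rightarrow> 'a \<Rightarrow> ('a \<times> 'a) set" where
  "red_flow F ts ps =
     {(x, y) \<in> F. x \<notin> {ts, ps} \<and> y \<notin> {ts, ps}} \<union> (preset F ts \<times> postset F ps)"

end

theory Submission
  imports Defs
begin

(* Reachability in M and in N are related by two simulations:
   - backward: the map "absorb", which turns each token on ps back into a copy
     of the preset of ts, sends every step of N to at most one step of M
     (firing ts itself becomes invisible);
   - forward: a step of M from a marking without tokens on ps is a step of N,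
     or, for a consumer of ps, the firing of ts followed by that step.
   Connectivity of M follows because every F-path between nodes other than
   ts, ps can bypass the detour "x -> ts -> ps -> t" by the new edge (x, t).
   Sub-soundness of M then follows from that of N: lift the M-run forward,
   apply sub-soundness of N, and bring the completing N-run back by absorb,
   which is the identity on markings without tokens on ps. *)

definition fire :: "('a \<times> 'a) set \<Rightarrow> 'a \<Rightarrow> 'a marking \<Rightarrow> 'a marking" where
  "fire F t m = (\<lambda>p. m p - bag (preset F t) p + bag (postset F t) p)"

lemma fire_step_iff: "fire_step T F m m' \<longleftrightarrow> (\<exists>t \<in> T. enabled F t m \<and> m' = fire F t m)"
  by (simp add: fire_step_def fire_def)

lemma reach_fire: "t \<in> T \<Longrightarrow> enabled F t m \<Longrightarrow> reach T F m (fire F t m)"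
  unfolding reach_def by (rule r_into_rtranclp) (auto simp: fire_step_iff)

lemma rtranclp_simulation:
  assumes "R\<^sup>*\<^sup>* x y" and "I x"
    and sim: "\<And>a b. R a b \<Longrightarrow> I a \<Longrightarrow> I b \<and> S\<^sup>*\<^sup>* (f a) (f b)"
  shows "I y \<and> S\<^sup>*\<^sup>* (f x) (f y)"
  using assms(1)
proof induction
  case base
  then show ?case using \<open>I x\<close> by simp
next
  case (step y z)
  then show ?case using sim[of y z] by (auto intro: rtranclp_trans)
qed

locale place_fusion =
  fixes P T :: "'a set" and F :: "('a \<times> 'a) set" and ts ps :: 'a
  assumes net: "petri_net P T F" and ts_in_T: "ts \<in> T" and ps_in_P: "ps \<in> P"
    and post_ts: "postset F ts = {ps}" and pre_ps: "preset F ps = {ts}"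
    and no_shortcut: "F \<inter> (preset F ts \<times> postset F ps) = {}"
begin

abbreviation Fr :: "('a \<times> 'a) set" where
  "Fr \<equiv> red_flow F ts ps"

lemma flow_bipartite: "(x, y) \<in> F \<Longrightarrow> (x \<in> P \<and> y \<in> T) \<or> (x \<in> T \<and> y \<in> P)"
  using net unfolding petri_net_def by auto

lemma places_transitions_disjoint: "P \<inter> T = {}"
  using net unfolding petri_net_def by auto

lemma pre_ts_places: "preset F ts \<subseteq> P"
  using flow_bipartite ts_in_T places_transitions_disjoint by (auto simp: preset_def)

lemma post_ps_transitions: "postset F ps \<subseteq> T"
  using flow_bipartite ps_in_P places_transitions_disjoint by (auto simp: postset_def)

lemma ps_notin_pre_ts: "ps \<notin> preset F ts"
  using no_shortcut by (auto simp: preset_def postset_def)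

lemma ts_notin_post_ps: "ts \<notin> postset F ps"
  using no_shortcut by (auto simp: preset_def postset_def)

lemma ps_notin_post: "t \<noteq> ts \<Longrightarrow> ps \<notin> postset F t"
  using pre_ps by (auto simp: preset_def postset_def)

(* A consumer of ps shares no input place with ts; hence the two presets
   add up without overlap in M. *)
lemma pre_consumer_disjoint: "t \<in> postset F ps \<Longrightarrow> y \<in> preset F ts \<Longrightarrow> y \<notin> preset F t"
  using no_shortcut by (auto simp: preset_def postset_def)

lemma bag_pre_red:
  assumes "t \<in> T" "t \<noteq> ts"
  shows "bag (preset Fr t) p = (if p = ps then 0 else bag (preset F t) p)
           + (if t \<in> postset F ps then bag (preset F ts) p else 0)"
proof -
  have "t \<noteq> ps" using assms ps_in_P places_transitions_disjoint by auto
  moreover have "(ts, t) \<notin> F" using flow_bipartite assms ts_in_T places_transitions_disjoint by blast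
  ultimately have "preset Fr t = (preset F t - {ps}) \<union> (if t \<in> postset F ps then preset F ts else {})"
    using assms by (auto simp: red_flow_def preset_def)
  then show ?thesis using pre_consumer_disjoint[of t p] ps_notin_pre_ts
    by (auto simp: bag_def)
qed

lemma bag_post_red:
  assumes "t \<in> T" "t \<noteq> ts"
  shows "bag (postset Fr t) = bag (postset F t)"
proof -
  have "t \<noteq> ps" using assms ps_in_P places_transitions_disjoint by auto
  moreover have "(t, ts) \<notin> F" using flow_bipartite assms ts_in_T places_transitions_disjoint by blast
  moreover have "t \<notin> preset F ts" using pre_ts_places assms places_transitions_disjoint by auto
  ultimately have "postset Fr t = postset F t"
    using assms ps_notin_post[of t] by (auto simp: red_flow_def postset_def)
  then show ?thesis by simp
qed

lemma bag_pre_ts_at_ps: "bag (preset F ts) ps = 0"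
  using ps_notin_pre_ts by (simp add: bag_def)

lemma bag_pre_at_ps: "bag (preset F t) ps = (if t \<in> postset F ps then 1 else 0)"
  by (simp add: bag_def preset_def postset_def)

lemma bag_post_at_ps: "t \<noteq> ts \<Longrightarrow> bag (postset F t) ps = 0"
  using ps_notin_post by (simp add: bag_def)

lemma bag_post_ts: "bag (postset F ts) q = (if q = ps then 1 else 0)"
  using post_ts by (simp add: bag_def)

definition absorb :: "'a marking \<Rightarrow> 'a marking" where
  "absorb m = (\<lambda>p. if p = ps then 0 else m p + m ps * bag (preset F ts) p)"

lemma absorb_id: "m ps = 0 \<Longrightarrow> absorb m = m"
  by (auto simp: absorb_def)

(* Firing ts only moves tokens from its preset to ps, which absorb undoes. *)
lemma absorb_fire_ts:
  assumes "enabled F ts m"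
  shows "absorb (fire F ts m) = absorb m"
proof
  fix p
  have "bag (preset F ts) p \<le> m p" using assms by (simp add: enabled_def)
  then show "absorb (fire F ts m) p = absorb m p"
    by (auto simp: absorb_def fire_def bag_post_ts bag_pre_ts_at_ps)
qed

lemma absorb_enabled:
  assumes "t \<in> T" "t \<noteq> ts" and en: "enabled F t m"
  shows "enabled Fr t (absorb m)"
  unfolding enabled_def
proof
  fix p
  have le: "\<And>q. bag (preset F t) q \<le> m q" using en by (simp add: enabled_def)
  show "bag (preset Fr t) p \<le> absorb m p"
  proof (cases "t \<in> postset F ps")
    case True
    then have "m ps \<ge> 1" using le[of ps] bag_pre_at_ps[of t] by simp
    then have "bag (preset F ts) p \<le> m ps * bag (preset F ts) p" by simp
    from add_mono[OF le[of p] this] show ?thesis using bag_pre_ts_at_ps bag_pre_red[OF assms(1,2), of p] True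
      by (auto simp: absorb_def)
  next
    case False
    then show ?thesis using le[of p] bag_pre_red[OF assms(1,2), of p]
      by (auto simp: absorb_def)
  qed
qed

lemma absorb_fire:
  assumes "t \<in> T" "t \<noteq> ts" and en: "enabled F t m"
  shows "absorb (fire F t m) = fire Fr t (absorb m)"
proof
  fix p
  have le: "\<And>q. bag (preset F t) q \<le> m q" using en by (simp add: enabled_def)
  note facts = le[of p] bag_pre_ts_at_ps bag_pre_red[OF assms(1,2), of p]
    bag_post_red[OF assms(1,2)] bag_post_at_ps[OF assms(2)] bag_pre_at_ps[of t]
  show "absorb (fire F t m) p = fire Fr t (absorb m) p"
  proof (cases "t \<in> postset F ps")
    case True
    then obtain n where "m ps = Suc n" using le[of ps] bag_pre_at_ps[of t]
      by (cases "m ps") auto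
    with True facts show ?thesis by (auto simp: absorb_def fire_def algebra_simps)
  next
    case False
    with facts show ?thesis by (auto simp: absorb_def fire_def algebra_simps)
  qed
qed

lemma step_absorb:
  assumes "fire_step T F m m2"
  shows "reach (T - {ts}) Fr (absorb m) (absorb m2)"
proof -
  obtain t where t: "t \<in> T" and en: "enabled F t m" and m2: "m2 = fire F t m"
    using assms by (auto simp: fire_step_iff)
  show ?thesis
  proof (cases "t = ts")
    case True
    then show ?thesis using en m2 absorb_fire_ts by (simp add: reach_def)
  next
    case False
    then have "t \<in> T - {ts}" using t by simp
    from reach_fire[OF this absorb_enabled[OF t False en]] show ?thesis
      using absorb_fire[OF t False en] m2 by simp
  qed
qed

lemma reach_absorb:
  assumes "reach T F m m2"
  shows "reach (T - {ts}) Fr (absorb m) (absorb m2)"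
  using rtranclp_simulation[where I = "\<lambda>_. True" and f = absorb] assms step_absorb
  unfolding reach_def by blast

lemma pre_red_nonconsumer:
  assumes "t \<in> T" "t \<noteq> ts" "t \<notin> postset F ps"
  shows "bag (preset Fr t) = bag (preset F t)"
  using bag_pre_red[OF assms(1,2)] bag_pre_at_ps[of t] assms(3) by auto

lemma fire_red_consumer:
  assumes "t \<in> T" "t \<noteq> ts" "t \<in> postset F ps"
    and m_ps: "m ps = 0" and en: "enabled Fr t m"
  shows "enabled F ts m" "enabled F t (fire F ts m)"
    and "fire F t (fire F ts m) = fire Fr t m"
proof -
  have le: "\<And>p. bag (preset Fr t) p \<le> m p" using en by (simp add: enabled_def)
  note facts = bag_pre_red[OF assms(1,2)] assms(3) bag_pre_at_ps[of t] m_ps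
    bag_post_ts bag_pre_ts_at_ps bag_post_at_ps[OF assms(2)] bag_post_red[OF assms(1,2)]
  show "enabled F ts m"
    unfolding enabled_def
  proof
    fix p show "bag (preset F ts) p \<le> m p"
      using le[of p] bag_pre_red[OF assms(1,2), of p] assms(3) by simp
  qed
  show "enabled F t (fire F ts m)"
    unfolding enabled_def
  proof
    fix p show "bag (preset F t) p \<le> fire F ts m p"
      using le[of p] facts by (cases "p = ps") (auto simp: fire_def)
  qed
  show "fire F t (fire F ts m) = fire Fr t m"
  proof
    fix p show "fire F t (fire F ts m) p = fire Fr t m p"
      using le[of p] facts by (cases "p = ps") (auto simp: fire_def)
  qed
qed

lemma step_red_lift:
  assumes "fire_step (T - {ts}) Fr m m2" and m_ps: "m ps = 0"
  shows "m2 ps = 0 \<and> reach T F m m2"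
proof -
  obtain t where t: "t \<in> T" "t \<noteq> ts" and en: "enabled Fr t m" and m2: "m2 = fire Fr t m"
    using assms(1) by (auto simp: fire_step_iff)
  have "m2 ps = 0"
    using m_ps bag_post_at_ps[OF t(2)] bag_post_red[OF t] by (simp add: m2 fire_def)
  moreover have "reach T F m m2"
  proof (cases "t \<in> postset F ps")
    case False
    then have "enabled F t m" "m2 = fire F t m"
      using en m2 pre_red_nonconsumer[OF t False] bag_post_red[OF t]
      by (simp_all add: enabled_def fire_def)
    then show ?thesis using reach_fire t(1) by simp
  next
    case True
    note via_ts = fire_red_consumer[OF t True m_ps en]
    have "reach T F m (fire F ts m)" using reach_fire ts_in_T via_ts(1) .
    moreover have "reach T F (fire F ts m) m2"
      using reach_fire[OF t(1) via_ts(2)] via_ts(3) m2 by simp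
    ultimately show ?thesis by (simp add: reach_def)
  qed
  ultimately show ?thesis by simp
qed

lemma reach_red_lift:
  assumes "reach (T - {ts}) Fr m m2" and "m ps = 0"
  shows "reach T F m m2"
proof -
  have "m2 ps = 0 \<and> (fire_step T F)\<^sup>*\<^sup>* (id m) (id m2)"
    by (rule rtranclp_simulation[where R = "fire_step (T - {ts}) Fr"])
      (use assms step_red_lift in \<open>auto simp: reach_def\<close>)
  then show ?thesis by (simp add: reach_def)
qed

(* An F-path from a node other than ts, ps is mirrored in Fr up to its
   last visit outside {ts, ps}; entering {ts, ps} happens from the preset
   of ts, and leaving it (to a consumer of ps) is a new edge. *)
lemma path_bypass:
  assumes "(a, b) \<in> F\<^sup>*" and "a \<notin> {ts, ps}"
  shows "(b \<notin> {ts, ps} \<longrightarrow> (a, b) \<in> Fr\<^sup>*) \<and>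
         (b \<in> {ts, ps} \<longrightarrow> (\<exists>q \<in> preset F ts. (a, q) \<in> Fr\<^sup>*))"
  using assms(1)
proof (induction rule: rtrancl_induct)
  case base
  then show ?case using assms(2) by simp
next
  case (step b c)
  show ?case
  proof (cases "b \<in> {ts, ps}")
    case False
    then have ab: "(a, b) \<in> Fr\<^sup>*" using step by simp
    show ?thesis
    proof (cases "c \<in> {ts, ps}")
      case False
      then have "(b, c) \<in> Fr" using \<open>b \<notin> {ts, ps}\<close> step(2) by (auto simp: red_flow_def)
      then show ?thesis using ab False by auto
    next
      case True
      moreover have "c \<noteq> ps" using pre_ps step(2) \<open>b \<notin> {ts, ps}\<close> by (auto simp: preset_def)
      ultimately have "b \<in> preset F ts" using step(2) by (simp add: preset_def)
      then show ?thesis using ab True by auto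
    qed
  next
    case True
    then obtain q where q: "q \<in> preset F ts" "(a, q) \<in> Fr\<^sup>*" using step by auto
    show ?thesis
    proof (cases "b = ts")
      case True
      then have "c = ps" using post_ts step(2) by (auto simp: postset_def)
      then show ?thesis using q by auto
    next
      case False
      then have c_post: "c \<in> postset F ps" using \<open>b \<in> {ts, ps}\<close> step(2) by (simp add: postset_def)
      then have "c \<notin> {ts, ps}"
        using ts_notin_post_ps post_ps_transitions ps_in_P places_transitions_disjoint by auto
      moreover have "(q, c) \<in> Fr" using q(1) c_post by (simp add: red_flow_def)
      ultimately show ?thesis using q(2) by auto
    qed
  qed
qed

lemma red_rtrancl: "(a, b) \<in> F\<^sup>* \<Longrightarrow> a \<notin> {ts, ps} \<Longrightarrow> b \<notin> {ts, ps} \<Longrightarrow> (a, b) \<in> Fr\<^sup>*"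
  using path_bypass by blast

lemma red_petri_net: "petri_net (P - {ps}) (T - {ts}) Fr"
proof -
  have "Fr \<subseteq> (P - {ps}) \<times> (T - {ts}) \<union> (T - {ts}) \<times> (P - {ps})"
  proof
    fix z assume z: "z \<in> Fr"
    then obtain x y where z_xy: "z = (x, y)" by (cases z)
    show "z \<in> (P - {ps}) \<times> (T - {ts}) \<union> (T - {ts}) \<times> (P - {ps})"
    proof (cases "(x, y) \<in> F \<and> x \<notin> {ts, ps} \<and> y \<notin> {ts, ps}")
      case True
      then show ?thesis using flow_bipartite[of x y] z_xy by auto
    next
      case False
      then have "x \<in> preset F ts" "y \<in> postset F ps" using z z_xy by (auto simp: red_flow_def)
      then show ?thesis using z_xy pre_ts_places post_ps_transitions ps_notin_pre_ts ts_notin_post_ps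
        by auto
    qed
  qed
  then show ?thesis using net by (auto simp: petri_net_def)
qed

lemma red_pWF:
  assumes wf: "pWF P T F In Out" and "ps \<notin> In \<union> Out"
  shows "pWF (P - {ps}) (T - {ts}) Fr In Out"
proof -
  have ends: "i \<notin> {ts, ps}" if "i \<in> In \<union> Out" for i
    using that assms ts_in_T places_transitions_disjoint by (auto simp: pWF_def)
  have from_In: "\<exists>i \<in> In. (i, x) \<in> Fr\<^sup>*"
    and to_Out: "\<exists>q \<in> Out. (x, q) \<in> Fr\<^sup>*" if x: "x \<in> P - {ps} \<union> (T - {ts})" for x
  proof -
    have x_node: "x \<in> P \<union> T" and x_kept: "x \<notin> {ts, ps}"
      using x ts_in_T ps_in_P places_transitions_disjoint by auto
    obtain i where "i \<in> In" "(i, x) \<in> F\<^sup>*" using wf x_node unfolding pWF_def by blast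
    then show "\<exists>i \<in> In. (i, x) \<in> Fr\<^sup>*" using ends x_kept red_rtrancl by blast
    obtain q where "q \<in> Out" "(x, q) \<in> F\<^sup>*" using wf x_node unfolding pWF_def by blast
    then show "\<exists>q \<in> Out. (x, q) \<in> Fr\<^sup>*" using ends x_kept red_rtrancl by blast
  qed
  show ?thesis using assms red_petri_net from_In to_Out by (auto simp: pWF_def)
qed

lemma red_sub_sound:
  assumes sound: "sub_sound P T F In Out" and "ps \<notin> In \<union> Out"
  shows "sub_sound (P - {ps}) (T - {ts}) Fr In Out"
  unfolding sub_sound_def
proof (intro allI impI)
  fix k k' :: nat and m' :: "'a marking"
  assume "k' \<le> k" and m': "is_marking (P - {ps}) m'"
    and run: "reach (T - {ts}) Fr (smult_mark k (bag In)) (\<lambda>p. m' p + smult_mark k' (bag Out) p)"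
  have "smult_mark k (bag In) ps = 0" using assms(2) by (simp add: smult_mark_def bag_def)
  then have "reach T F (smult_mark k (bag In)) (\<lambda>p. m' p + smult_mark k' (bag Out) p)"
    using reach_red_lift[OF run] by simp
  moreover have "is_marking P m'" using m' by (auto simp: is_marking_def)
  ultimately have "reach T F m' (smult_mark (k - k') (bag Out))"
    using sound \<open>k' \<le> k\<close> unfolding sub_sound_def by blast
  then have "reach (T - {ts}) Fr (absorb m') (absorb (smult_mark (k - k') (bag Out)))"
    by (rule reach_absorb)
  moreover have "m' ps = 0" using m' by (simp add: is_marking_def)
  moreover have "smult_mark (k - k') (bag Out) ps = 0" using assms(2) by (simp add: smult_mark_def bag_def)
  ultimately show "reach (T - {ts}) Fr m' (smult_mark (k - k') (bag Out))"
    by (simp add: absorb_id)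
qed

end

theorem mainTheorem11:
  fixes P T In Out :: "'a set" and F :: "('a \<times> 'a) set" and ts ps :: 'a
  assumes "pWF P T F In Out"
    and "ts \<in> T" and "ps \<in> P"
    and "postset F ts = {ps}" and "preset F ps = {ts}"
    and "ps \<notin> In \<union> Out"
    and "F \<inter> (preset F ts \<times> postset F ps) = {}"
  shows "pWF (P - {ps}) (T - {ts}) (red_flow F ts ps) In Out \<and>
         (sub_sound P T F In Out \<longrightarrow> sub_sound (P - {ps}) (T - {ts}) (red_flow F ts ps) In Out)"
proof -
  interpret place_fusion P T F ts ps
    using assms(1-5,7) by unfold_locales (simp_all add: pWF_def)
  show ?thesis using red_pWF[OF assms(1,6)] red_sub_sound[OF _ assms(6)] by blast
qed

end
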